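(* The map sending a smooth extremal assignment $Z$ of order $n$ to the hypergraph on vertex set $[n]$ with edge set $\{[n]\setminus B: B \text{ a maximal element of } \mathcal{C}_Z\}$ is a bijection from the set of smooth extremal assignments of order $n$ onto the set of simple intersecting families of order $n$, rank $\le n-2$ and antirank $\ge 2$. Here $\mathcal{C}_Z=\{\ell(v): G\in S_2(n),\ v\in Z(G)\}$.
   Context: $[n]=\{1,\dots,n\}$. A stable $n$-labeled tree is a finite tree with $n$ leaves labeled bijectively by $[n]$, all internal vertices of degree $\ge 3$; $V(G)$ its internal vertices; $S(n)$ the set of such trees up to label-preserving isomorphism and $S_2(n)$ those with exactly 2 internal vertices. $\ell(v)$ is the set of labels of leaves adjacent to $v$. $G\rightsquigarrow G'$: $G'$ obtained by collapsing connected sets of internal vertices, inducing surjection $\pi:V(G)\to V(G')$; $v\rightsquigarrow v'$ means $\pi(v)=v'$. An extremal assignment of order $n$: rule $Z(G)\subset V(G)$ for $G\in S(n)$ with (a) $Z(G)\ne V(G)$, (b) if $G\rightsquigarrow G'$ and $\pi^{-1}(v')=\{v_1,\dots,v_k\}$ then $v'\in Z(G')\iff v_1,\dots,v_k\in Z(G)$. $Z$ is smooth if for every $G$ and $v\in Z(G)$ there exist $G'\in S_2(n)$, $v'\in Z(G')$ with $G\rightsquigarrow G'$, $v\rightsquigarrow v'$. A simple intersecting family of order $n$, rank $\le n-2$, antirank $\ge2$ is a collection $\{A_i\}$ of subsets of $[n]$ with $2\le|A_i|\le n-2$ for all $i$, $A_i\subset A_j\Rightarrow i=j$, and $A_i\cap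 A_j\ne\emptyset$ for all $i,j$. *)

theory Defs
  imports Main
begin

text \<open>Internal vertices are natural numbers
  (set iv), edges between internal vertices are two-element sets (ied), and the
  leaf labelled i (for i in {1..n}) is attached to the internal vertex lf i.
  Since leaves are pendant, the whole graph is a tree iff the internal graph is.\<close>

record stree =
  iv  :: "nat set"
  ied :: "nat set set"
  lf  :: "nat \<Rightarrow> nat"

definition conn_on :: "nat set set \<Rightarrow> nat set \<Rightarrow> bool" where
  "conn_on E S \<longleftrightarrow>
     (\<forall>u\<in>S. \<forall>w\<in>S. (\<lambda>a b. a \<in> S \<and> b \<in> S \<and> {a, b} \<in> E)\<^sup>*\<^sup>* u w)"

definition has_cycle :: "nat set set \<Rightarrow> nat set \<Rightarrow> bool" where
  "has_cycle E V \<longleftrightarrow>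
     (\<exists>cs. 3 \<le> length cs \<and> distinct cs \<and> set cs \<subseteq> V \<and>
           (\<forall>i < length cs. {cs ! i, cs ! ((i + 1) mod length cs)} \<in> E))"

definition ell :: "nat \<Rightarrow> stree \<Rightarrow> nat \<Rightarrow> nat set" where
  "ell n G v = {i \<in> {1..n}. lf G i = v}"

definition sdeg :: "nat \<Rightarrow> stree \<Rightarrow> nat \<Rightarrow> nat" where
  "sdeg n G v = card {u \<in> iv G. {u, v} \<in> ied G} + card (ell n G v)"

definition stable_tree :: "nat \<Rightarrow> stree \<Rightarrow> bool" where
  "stable_tree n G \<longleftrightarrow>
     finite (iv G) \<and> iv G \<noteq> {} \<and>
     ied G \<subseteq> {e. \<exists>u v. e = {u, v} \<and> u \<noteq> v \<and> u \<in> iv G \<and> v \<in> iv G} \<and>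
     conn_on (ied G) (iv G) \<and> \<not> has_cycle (ied G) (iv G) \<and>
     (\<forall>i\<in>{1..n}. lf G i \<in> iv G) \<and>
     (\<forall>v\<in>iv G. 3 \<le> sdeg n G v)"

definition collapse :: "nat \<Rightarrow> stree \<Rightarrow> stree \<Rightarrow> (nat \<Rightarrow> nat) \<Rightarrow> bool" where
  "collapse n G G' \<pi> \<longleftrightarrow>
     stable_tree n G \<and> stable_tree n G' \<and>
     \<pi> ` iv G = iv G' \<and>
     (\<forall>v'\<in>iv G'. conn_on (ied G) {v \<in> iv G. \<pi> v = v'}) \<and>
     ied G' = {{\<pi> u, \<pi> v} | u v. {u, v} \<in> ied G \<and> \<pi> u \<noteq> \<pi> v} \<and>
     (\<forall>i\<in>{1..n}. lf G' i = \<pi> (lf G i))"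

definition extremal :: "nat \<Rightarrow> (stree \<Rightarrow> nat set) \<Rightarrow> bool" where
  "extremal n Z \<longleftrightarrow>
     (\<forall>G. stable_tree n G \<longrightarrow> Z G \<subseteq> iv G \<and> Z G \<noteq> iv G) \<and>
     (\<forall>G G' \<pi>. collapse n G G' \<pi> \<longrightarrow>
        (\<forall>v'\<in>iv G'. v' \<in> Z G' \<longleftrightarrow> {v \<in> iv G. \<pi> v = v'} \<subseteq> Z G))"

definition smooth :: "nat \<Rightarrow> (stree \<Rightarrow> nat set) \<Rightarrow> bool" where
  "smooth n Z \<longleftrightarrow>
     (\<forall>G. stable_tree n G \<longrightarrow>
        (\<forall>v\<in>Z G. \<exists>G' \<pi>. card (iv G') = 2 \<and> collapse n G G' \<pi> \<and> \<pi> v \<in> Z G'))"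

text \<open>Set of smooth extremal assignments of order n (extensional: value {} off S(n)).\<close>
definition smooth_extremal_assignments :: "nat \<Rightarrow> (stree \<Rightarrow> nat set) set" where
  "smooth_extremal_assignments n =
     {Z. extremal n Z \<and> smooth n Z \<and> (\<forall>G. \<not> stable_tree n G \<longrightarrow> Z G = {})}"

definition CZ :: "nat \<Rightarrow> (stree \<Rightarrow> nat set) \<Rightarrow> nat set set" where
  "CZ n Z = {ell n G v | G v. stable_tree n G \<and> card (iv G) = 2 \<and> v \<in> Z G}"

definition hyp_of :: "nat \<Rightarrow> (stree \<Rightarrow> nat set) \<Rightarrow> nat set set" where
  "hyp_of n Z = {{1..n} - B | B. B \<in> CZ n Z \<and> (\<forall>B'\<in>CZ n Z. \<not> B \<subset> B')}"

definition simple_intersecting_families :: "nat \<Rightarrow> nat set set set" where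
  "simple_intersecting_families n =
     {F. (\<forall>A\<in>F. A \<subseteq> {1..n} \<and> 2 \<le> card A \<and> card A \<le> n - 2) \<and>
         (\<forall>A\<in>F. \<forall>B\<in>F. A \<subseteq> B \<longrightarrow> A = B) \<and>
         (\<forall>A\<in>F. \<forall>B\<in>F. A \<inter> B \<noteq> {})}"

end

theory Submission
  imports Defs
begin

(*
  An extremal assignment Z is determined on two-vertex trees by the family C_Z, and smoothness
  determines Z on every tree from its values on two-vertex trees: a vertex is marked iff its image
  under some collapse onto a two-vertex tree is.  Collapsing a path with three internal vertices
  in its three possible ways shows that C_Z is closed under shrinking (among sets B with
  |B| >= 2 and |[n] - B| >= 2) and contains no two sets covering [n].  Hence the complements of the
  maximal elements of C_Z form a simple intersecting family, from which C_Z is recovered; this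
  gives injectivity.

  Conversely, given an intersecting family F, mark in every tree the vertices lying on a side of an
  internal edge whose leaves miss some member of F.  Since the members of F pairwise intersect, two
  such sides never cover the tree; this Helly-type fact makes the marking compatible with
  collapsing, and on two-vertex trees the marking returns F.
*)

definition adj_in :: "nat set set \<Rightarrow> nat set \<Rightarrow> nat \<Rightarrow> nat \<Rightarrow> bool" where
  "adj_in E S a b \<longleftrightarrow> a \<in> S \<and> b \<in> S \<and> {a, b} \<in> E"

lemma conn_on_iff_adj_in: "conn_on E S \<longleftrightarrow> (\<forall>u\<in>S. \<forall>w\<in>S. (adj_in E S)\<^sup>*\<^sup>* u w)"
  unfolding conn_on_def adj_in_def[abs_def] by simp

lemma adj_in_rtranclp_sym:
  assumes "(adj_in E S)\<^sup>*\<^sup>* a b"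
  shows "(adj_in E S)\<^sup>*\<^sup>* b a"
proof -
  have "symp (adj_in E S)" unfolding adj_in_def by (auto intro: sympI simp: insert_commute)
  then show ?thesis using assms symp_rtranclp sympD by metis
qed

lemma adj_in_rtranclp_mem: "(adj_in E S)\<^sup>*\<^sup>* a b \<Longrightarrow> a \<noteq> b \<Longrightarrow> a \<in> S \<and> b \<in> S"
proof (induction rule: rtranclp_induct)
  case (step y z)
  then show ?case unfolding adj_in_def by (cases "a = y") auto
qed simp

lemma rtranclp_distinct_path:
  assumes "P\<^sup>*\<^sup>* x y"
  shows "\<exists>xs. xs \<noteq> [] \<and> hd xs = x \<and> last xs = y \<and> distinct xs \<and> successively P xs"
  using assms
proof (induction rule: rtranclp_induct)
  case base
  show ?case by (intro exI[of _ "[x]"]) simp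
next
  case (step y z)
  then obtain xs where xs: "xs \<noteq> []" "hd xs = x" "last xs = y" "distinct xs" "successively P xs"
    by blast
  show ?case
  proof (cases "z \<in> set xs")
    case True
    then obtain ys zs where yz: "xs = ys @ z # zs" by (meson split_list)
    show ?thesis
    proof (intro exI[of _ "ys @ [z]"] conjI)
      show "hd (ys @ [z]) = x" using xs yz by (cases ys) auto
      show "successively P (ys @ [z])" using xs(5) yz by (simp add: successively_append_iff)
    qed (use xs yz in auto)
  next
    case False
    with xs step(2) show ?thesis
      by (intro exI[of _ "xs @ [z]"]) (auto simp: successively_append_iff)
  qed
qed

lemma rtranclp_exit:
  assumes "P\<^sup>*\<^sup>* x y" "x \<in> W" "y \<notin> W"
  shows "\<exists>c d. c \<in> W \<and> d \<notin> W \<and> P c d \<and> (\<lambda>u v. P u v \<and> u \<notin> W \<and> v \<notin> W)\<^sup>*\<^sup>* d y"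
  using assms
proof (induction rule: rtranclp_induct)
  case (step y z)
  show ?case
  proof (cases "y \<in> W")
    case True
    then show ?thesis using step by blast
  next
    case False
    then obtain c d where cd: "c \<in> W" "d \<notin> W" "P c d"
      "(\<lambda>u v. P u v \<and> u \<notin> W \<and> v \<notin> W)\<^sup>*\<^sup>* d y"
      using step by blast
    moreover have "(\<lambda>u v. P u v \<and> u \<notin> W \<and> v \<notin> W)\<^sup>*\<^sup>* d z"
      using cd(4) step(2,5) False by (simp add: rtranclp.rtrancl_into_rtrancl)
    ultimately show ?thesis by blast
  qed
qed simp

lemma has_cycle_closed_path:
  assumes len: "3 \<le> length xs" and dist: "distinct xs"
    and path: "successively (adj_in E V) xs" and closing: "{last xs, hd xs} \<in> E"
  shows "has_cycle E V"
  unfolding has_cycle_def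
proof (intro exI[of _ xs] conjI allI impI)
  have step: "adj_in E V (xs ! i) (xs ! Suc i)" if "Suc i < length xs" for i
    using path that successively_nth by blast
  show "set xs \<subseteq> V"
  proof
    fix z assume "z \<in> set xs"
    then obtain i where i: "i < length xs" "z = xs ! i" by (auto simp: in_set_conv_nth)
    show "z \<in> V"
    proof (cases "Suc i < length xs")
      case True
      then show ?thesis using step[OF True] i unfolding adj_in_def by simp
    next
      case False
      then have "Suc (i - 1) < length xs" "Suc (i - 1) = i" using i len by auto
      then show ?thesis using step[of "i - 1"] i unfolding adj_in_def by auto
    qed
  qed
  fix i assume i: "i < length xs"
  show "{xs ! i, xs ! ((i + 1) mod length xs)} \<in> E"
  proof (cases "Suc i < length xs")
    case True
    then show ?thesis using step[OF True] unfolding adj_in_def by simp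
  next
    case False
    then have "i = length xs - 1" using i by simp
    moreover have "xs \<noteq> []" "0 < length xs" using len by auto
    ultimately have "xs ! i = last xs" "(i + 1) mod length xs = 0" by (simp_all add: last_conv_nth)
    moreover have "xs ! 0 = hd xs" using \<open>xs \<noteq> []\<close> by (simp add: hd_conv_nth)
    ultimately show ?thesis using closing by simp
  qed
qed (use len dist in auto)

definition reach_del :: "stree \<Rightarrow> nat set \<Rightarrow> nat \<Rightarrow> nat \<Rightarrow> bool" where
  "reach_del G e = (adj_in (ied G - {e}) (iv G))\<^sup>*\<^sup>*"

definition branch :: "stree \<Rightarrow> nat set \<Rightarrow> nat \<Rightarrow> nat set" where
  "branch G e x = {y. reach_del G e x y}"

definition leaves_in :: "nat \<Rightarrow> stree \<Rightarrow> nat set \<Rightarrow> nat set" where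
  "leaves_in n G S = {i \<in> {1..n}. lf G i \<in> S}"

lemma stable_tree_edge:
  assumes "stable_tree n G" "e \<in> ied G"
  obtains a b where "e = {a, b}" "a \<noteq> b" "a \<in> iv G" "b \<in> iv G"
  using assms unfolding stable_tree_def by blast

lemma stable_tree_edge_mem:
  assumes "stable_tree n G" "{a, b} \<in> ied G"
  shows "a \<in> iv G" "b \<in> iv G" "a \<noteq> b"
  using stable_tree_edge[OF assms] by (auto simp: doubleton_eq_iff)

lemma stable_tree_lf: "stable_tree n G \<Longrightarrow> i \<in> {1..n} \<Longrightarrow> lf G i \<in> iv G"
  unfolding stable_tree_def by blast

lemma reach_del_refl [simp]: "reach_del G e x x"
  unfolding reach_del_def by simp

lemma reach_del_sym: "reach_del G e x y \<Longrightarrow> reach_del G e y x"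
  unfolding reach_del_def by (rule adj_in_rtranclp_sym)

lemma reach_del_trans: "reach_del G e x y \<Longrightarrow> reach_del G e y z \<Longrightarrow> reach_del G e x z"
  unfolding reach_del_def by simp

lemma reach_del_step:
  "x \<in> iv G \<Longrightarrow> y \<in> iv G \<Longrightarrow> {x, y} \<in> ied G \<Longrightarrow> {x, y} \<noteq> e \<Longrightarrow> reach_del G e x y"
  unfolding reach_del_def adj_in_def by (simp add: r_into_rtranclp)

lemma reach_del_mem: "reach_del G e x y \<Longrightarrow> x \<in> iv G \<Longrightarrow> y \<in> iv G"
  unfolding reach_del_def using adj_in_rtranclp_mem by metis

lemma reach_del_edge:
  "stable_tree n G \<Longrightarrow> {c, d} \<in> ied G \<Longrightarrow> {c, d} \<noteq> e \<Longrightarrow> reach_del G e c d"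
  using reach_del_step stable_tree_edge_mem by metis

lemma not_reach_del_edge:
  assumes st: "stable_tree n G" and e: "{a, b} \<in> ied G"
  shows "\<not> reach_del G {a, b} a b"
proof
  assume "reach_del G {a, b} a b"
  then obtain xs where xs: "xs \<noteq> []" "hd xs = a" "last xs = b" "distinct xs"
    and path: "successively (adj_in (ied G - {{a, b}}) (iv G)) xs"
    unfolding reach_del_def using rtranclp_distinct_path by metis
  have "a \<noteq> b" using stable_tree_edge_mem[OF st e] by simp
  have "3 \<le> length xs"
  proof (rule ccontr)
    assume "\<not> 3 \<le> length xs"
    with xs path \<open>a \<noteq> b\<close> show False
      by (cases xs rule: remdups_adj.cases) (auto simp: adj_in_def Suc_le_eq)
  qed
  moreover have "successively (adj_in (ied G) (iv G)) xs"
    using path by (rule successively_mono) (auto simp: adj_in_def)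
  ultimately have "has_cycle (ied G) (iv G)"
    using has_cycle_closed_path xs e by (metis insert_commute)
  with st show False unfolding stable_tree_def by simp
qed

lemma adj_in_rtranclp_reach_del_cases:
  assumes "(adj_in (ied G) (iv G))\<^sup>*\<^sup>* x y"
  shows "reach_del G {a, b} x y \<or> (reach_del G {a, b} x a \<and> reach_del G {a, b} b y)
    \<or> (reach_del G {a, b} x b \<and> reach_del G {a, b} a y)"
  using assms
proof (induction rule: rtranclp_induct)
  case (step y z)
  then have yz: "y \<in> iv G" "z \<in> iv G" "{y, z} \<in> ied G" unfolding adj_in_def by auto
  show ?case
  proof (cases "{y, z} = {a, b}")
    case False
    then have "reach_del G {a, b} y z" using yz reach_del_step by metis
    then show ?thesis using step.IH reach_del_trans by metis
  next
    case True
    then have "(y = a \<and> z = b) \<or> (y = b \<and> z = a)" by (auto simp: doubleton_eq_iff)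
    then show ?thesis using step.IH reach_del_trans by (metis reach_del_refl)
  qed
qed simp

lemma reach_del_endpoint:
  assumes st: "stable_tree n G" and x: "x \<in> iv G" and a: "a \<in> iv G"
  shows "reach_del G {a, b} x a \<or> reach_del G {a, b} x b"
proof -
  have "(adj_in (ied G) (iv G))\<^sup>*\<^sup>* x a"
    using st x a unfolding stable_tree_def conn_on_iff_adj_in by blast
  from adj_in_rtranclp_reach_del_cases[OF this, of a b] show ?thesis
    by (metis reach_del_refl reach_del_trans)
qed

lemma reach_del_change_edge:
  assumes "reach_del G e x y" and "\<forall>z\<in>f. \<not> reach_del G e y z"
  shows "reach_del G f x y"
  using assms(1)[unfolded reach_del_def]
proof (induction rule: converse_rtranclp_induct)
  case (step u v)
  have "reach_del G e v y" using step(2) unfolding reach_del_def .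
  have "{u, v} \<noteq> f"
  proof
    assume "{u, v} = f"
    then have "v \<in> f" by blast
    with assms(2) \<open>reach_del G e v y\<close> show False using reach_del_sym by blast
  qed
  then have "reach_del G f u v" using step(1) reach_del_step unfolding adj_in_def by auto
  then show ?case using step.IH reach_del_trans by metis
qed simp

lemma branch_self: "x \<in> branch G e x"
  unfolding branch_def by simp

lemma branch_eq: "reach_del G e x y \<Longrightarrow> branch G e x = branch G e y"
  unfolding branch_def using reach_del_sym reach_del_trans by blast

lemma branch_subset: "x \<in> iv G \<Longrightarrow> branch G e x \<subseteq> iv G"
  unfolding branch_def using reach_del_mem by blast

lemma branches_disjoint:
  assumes "stable_tree n G" "{a, b} \<in> ied G"
  shows "branch G {a, b} a \<inter> branch G {a, b} b = {}"
  using not_reach_del_edge[OF assms] unfolding branch_def using reach_del_sym reach_del_trans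
  by blast

lemma branches_cover:
  assumes st: "stable_tree n G" and e: "{a, b} \<in> ied G"
  shows "iv G = branch G {a, b} a \<union> branch G {a, b} b"
proof
  have ab: "a \<in> iv G" "b \<in> iv G" using stable_tree_edge_mem[OF st e] by auto
  show "iv G \<subseteq> branch G {a, b} a \<union> branch G {a, b} b"
    using reach_del_endpoint[OF st _ ab(1)] unfolding branch_def using reach_del_sym by blast
  show "branch G {a, b} a \<union> branch G {a, b} b \<subseteq> iv G" using branch_subset ab by blast
qed

lemma branches_eqI:
  assumes st: "stable_tree n G" and e: "{a, b} \<in> ied G"
    and S: "S \<subseteq> branch G {a, b} a" and T: "T \<subseteq> branch G {a, b} b" and cover: "iv G \<subseteq> S \<union> T"
  shows "branch G {a, b} a = S"
  using branches_cover[OF st e] branches_disjoint[OF st e] S T cover by blast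

lemma edge_in_one_branch:
  assumes st: "stable_tree n G" and e: "{a, b} \<in> ied G" and f: "{c, d} \<in> ied G"
    and ne: "{c, d} \<noteq> {a, b}"
  shows "{c, d} \<subseteq> branch G {a, b} a \<or> {c, d} \<subseteq> branch G {a, b} b"
proof -
  have "c \<in> branch G {a, b} a \<or> c \<in> branch G {a, b} b"
    using branches_cover[OF st e] stable_tree_edge_mem[OF st f] by blast
  moreover have "reach_del G {a, b} c d" using reach_del_edge[OF st f ne] .
  ultimately show ?thesis unfolding branch_def using reach_del_trans by blast
qed

lemma branch_nested:
  assumes st: "stable_tree n G" and e: "{a, b} \<in> ied G"
    and f: "f \<in> ied G" "f \<noteq> {a, b}" "f \<subseteq> branch G {a, b} a"
  shows "branch G {a, b} b \<subseteq> branch G f a"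
proof
  fix x assume "x \<in> branch G {a, b} b"
  then have "reach_del G {a, b} x b" unfolding branch_def using reach_del_sym by blast
  moreover have "\<forall>z\<in>f. \<not> reach_del G {a, b} b z"
    using f(3) branches_disjoint[OF st e] unfolding branch_def by blast
  ultimately have "reach_del G f x b" by (rule reach_del_change_edge)
  moreover have "reach_del G f a b" using reach_del_edge[OF st e] f(2) by metis
  ultimately show "x \<in> branch G f a" unfolding branch_def using reach_del_sym reach_del_trans
    by blast
qed

lemma branch_connected:
  assumes "x \<in> iv G"
  shows "conn_on (ied G) (branch G e x)"
proof -
  have path: "(adj_in (ied G) (branch G e x))\<^sup>*\<^sup>* x y" if "reach_del G e x y" for y
    using that[unfolded reach_del_def]
  proof (induction rule: rtranclp_induct)
    case (step y z)
    then have "adj_in (ied G) (branch G e x) y z"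
      unfolding adj_in_def branch_def reach_del_def by (auto intro: rtranclp.rtrancl_into_rtrancl)
    then show ?case using step.IH by simp
  qed simp
  show ?thesis unfolding conn_on_iff_adj_in
    using path adj_in_rtranclp_sym unfolding branch_def by (metis mem_Collect_eq rtranclp_trans)
qed

lemma connected_subset_branch:
  assumes W: "W \<subseteq> iv G" "conn_on (ied G) W" and c: "c \<in> W" and d: "d \<notin> W"
  shows "W \<subseteq> branch G {c, d} c"
proof
  fix x assume "x \<in> W"
  then have "(adj_in (ied G) W)\<^sup>*\<^sup>* c x" using W(2) c unfolding conn_on_iff_adj_in by blast
  moreover have "adj_in (ied G - {{c, d}}) (iv G) u v" if "adj_in (ied G) W u v" for u v
    using that W(1) d unfolding adj_in_def by (auto simp: doubleton_eq_iff)
  ultimately show "x \<in> branch G {c, d} c" unfolding branch_def reach_del_def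
    by (metis mem_Collect_eq mono_rtranclp)
qed

definition is_branch :: "stree \<Rightarrow> nat set \<Rightarrow> bool" where
  "is_branch G S \<longleftrightarrow> (\<exists>e\<in>ied G. \<exists>x\<in>e. S = branch G e x)"

lemma is_branchI: "{a, b} \<in> ied G \<Longrightarrow> is_branch G (branch G {a, b} a)"
  unfolding is_branch_def by blast

lemma is_branchE:
  assumes st: "stable_tree n G" and "is_branch G S"
  obtains a b where "{a, b} \<in> ied G" "a \<noteq> b" "a \<in> iv G" "b \<in> iv G" "S = branch G {a, b} a"
proof -
  obtain e x where ex: "e \<in> ied G" "x \<in> e" "S = branch G e x"
    using assms(2) unfolding is_branch_def by blast
  moreover obtain p q where "e = {p, q}" using stable_tree_edge[OF st ex(1)] by metis
  ultimately obtain y where "e = {x, y}" by (metis empty_iff insertE insert_commute)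
  with ex that show ?thesis using stable_tree_edge_mem[OF st] by blast
qed

lemma finite_is_branch: "stable_tree n G \<Longrightarrow> finite {S. is_branch G S}"
proof -
  assume st: "stable_tree n G"
  have "S \<subseteq> iv G" if "is_branch G S" for S using is_branchE[OF st that] branch_subset by metis
  then have "{S. is_branch G S} \<subseteq> Pow (iv G)" by blast
  moreover have "finite (iv G)" using st unfolding stable_tree_def by simp
  ultimately show ?thesis by (simp add: finite_subset)
qed

lemma branch_psubset:
  assumes st: "stable_tree n G" and dc: "{d, c} \<in> ied G" and du: "{d, u} \<in> ied G" and uc: "u \<noteq> c"
  shows "branch G {d, u} u \<subset> branch G {d, c} d"
proof
  have ne: "{d, u} \<noteq> {d, c}" using uc by (auto simp: doubleton_eq_iff)
  have "reach_del G {d, c} d u" using reach_del_edge[OF st du ne] .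
  then have "{d, u} \<subseteq> branch G {d, c} d" unfolding branch_def by simp
  then have "branch G {d, c} c \<subseteq> branch G {d, u} d" using branch_nested[OF st dc du ne] by blast
  moreover have "branch G {d, u} u \<inter> branch G {d, u} d = {}" using branches_disjoint[OF st du] by blast
  moreover have "branch G {d, u} u \<subseteq> iv G" using branch_subset stable_tree_edge_mem[OF st du] by metis
  ultimately show "branch G {d, u} u \<subseteq> branch G {d, c} d" using branches_cover[OF st dc] by blast
  show "branch G {d, u} u \<noteq> branch G {d, c} d"
    using branches_disjoint[OF st du] branch_self by blast
qed

(* A minimal branch inside the given one hangs off a vertex d with a single internal
   neighbour, so stability puts at least two leaves at d. *)
lemma two_le_card_leaves_in_branch:
  assumes st: "stable_tree n G" and e: "{a, b} \<in> ied G"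
  shows "2 \<le> card (leaves_in n G (branch G {a, b} a))"
proof -
  obtain U where "is_branch G U" "U \<subseteq> branch G {a, b} a"
    and min: "\<And>T. is_branch G T \<Longrightarrow> T \<subseteq> U \<Longrightarrow> T = U"
    using finite_has_minimal2[OF finite_is_branch[OF st], of "branch G {a, b} a"] is_branchI[OF e]
    by auto
  then obtain d c where dc: "{d, c} \<in> ied G" "d \<in> iv G" "U = branch G {d, c} d"
    using is_branchE[OF st] by metis
  have "{u \<in> iv G. {u, d} \<in> ied G} \<subseteq> {c}"
  proof
    fix u assume u: "u \<in> {u \<in> iv G. {u, d} \<in> ied G}"
    then have du: "{d, u} \<in> ied G" by (simp add: insert_commute)
    show "u \<in> {c}"
    proof (rule ccontr)
      assume "u \<notin> {c}"
      then have "branch G {d, u} u \<subset> U" using branch_psubset[OF st dc(1) du] dc(3) by simp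
      moreover have "is_branch G (branch G {d, u} u)"
        using is_branchI[of u d G] u by (simp add: insert_commute)
      ultimately show False using min by blast
    qed
  qed
  then have "card {u \<in> iv G. {u, d} \<in> ied G} \<le> card {c}" by (intro card_mono) auto
  moreover have "3 \<le> sdeg n G d" using st dc(2) unfolding stable_tree_def by blast
  ultimately have two: "2 \<le> card (ell n G d)" unfolding sdeg_def by simp
  have "ell n G d \<subseteq> leaves_in n G (branch G {a, b} a)"
    using \<open>U \<subseteq> branch G {a, b} a\<close> dc(3) branch_self unfolding ell_def leaves_in_def by blast
  moreover have "finite (leaves_in n G (branch G {a, b} a))" unfolding leaves_in_def by simp
  ultimately show ?thesis using card_mono two by (meson le_trans)
qed

lemma leaves_in_branches_compl:
  assumes st: "stable_tree n G" and e: "{a, b} \<in> ied G"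
  shows "{1..n} - leaves_in n G (branch G {a, b} a) = leaves_in n G (branch G {a, b} b)"
  using branches_cover[OF st e] branches_disjoint[OF st e] stable_tree_lf[OF st]
  unfolding leaves_in_def by blast

lemma collapse_stable_source: "collapse n G G' \<pi> \<Longrightarrow> stable_tree n G"
  unfolding collapse_def by (elim conjE)

lemma collapse_stable_target: "collapse n G G' \<pi> \<Longrightarrow> stable_tree n G'"
  unfolding collapse_def by (elim conjE)

lemma collapse_image: "collapse n G G' \<pi> \<Longrightarrow> \<pi> ` iv G = iv G'"
  unfolding collapse_def by (elim conjE)

lemma collapse_fibre_connected:
  "collapse n G G' \<pi> \<Longrightarrow> v' \<in> iv G' \<Longrightarrow> conn_on (ied G) {v \<in> iv G. \<pi> v = v'}"
  unfolding collapse_def by (elim conjE) blast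

lemma collapse_ied:
  "collapse n G G' \<pi> \<Longrightarrow> ied G' = {{\<pi> u, \<pi> v} | u v. {u, v} \<in> ied G \<and> \<pi> u \<noteq> \<pi> v}"
  unfolding collapse_def by (elim conjE)

lemma collapse_lf: "collapse n G G' \<pi> \<Longrightarrow> i \<in> {1..n} \<Longrightarrow> lf G' i = \<pi> (lf G i)"
  unfolding collapse_def by (elim conjE) blast

lemma collapse_edge_image:
  assumes "collapse n G G' \<pi>" "{y, z} \<in> ied G" "\<pi> y \<noteq> \<pi> z"
  shows "{\<pi> y, \<pi> z} \<in> ied G'"
proof -
  have "{\<pi> y, \<pi> z} \<in> {{\<pi> u, \<pi> v} | u v. {u, v} \<in> ied G \<and> \<pi> u \<noteq> \<pi> v}"
    using assms(2,3) by blast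
  then show ?thesis using collapse_ied[OF assms(1)] by simp
qed

lemma collapse_fibre_reach_del:
  assumes c: "collapse n G G' \<pi>" and uw: "\<pi> u \<noteq> \<pi> w"
    and xy: "x \<in> iv G" "y \<in> iv G" "\<pi> x = \<pi> y"
  shows "reach_del G {u, w} x y"
proof -
  define W where "W = {z \<in> iv G. \<pi> z = \<pi> x}"
  have "conn_on (ied G) W" unfolding W_def
    using collapse_fibre_connected[OF c] collapse_image[OF c] xy(1) by blast
  moreover have "x \<in> W" "y \<in> W" using xy unfolding W_def by auto
  ultimately have "(adj_in (ied G) W)\<^sup>*\<^sup>* x y" unfolding conn_on_iff_adj_in by blast
  moreover have "adj_in (ied G - {{u, w}}) (iv G) p q" if "adj_in (ied G) W p q" for p q
    using that uw unfolding adj_in_def W_def by (auto simp: doubleton_eq_iff)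
  ultimately show ?thesis unfolding reach_del_def by (metis mono_rtranclp)
qed

(* An edge of G' joining the images of u and w would, together with the connected fibres,
   give a path from u to w avoiding the bridge {u, w}. *)
lemma collapse_reach_del_image:
  assumes c: "collapse n G G' \<pi>" and e: "{u, w} \<in> ied G" and uw: "\<pi> u \<noteq> \<pi> w"
    and r: "reach_del G {u, w} x y"
  shows "reach_del G' {\<pi> u, \<pi> w} (\<pi> x) (\<pi> y)"
  using r[unfolded reach_del_def]
proof (induction rule: rtranclp_induct)
  case (step y z)
  have st: "stable_tree n G" using collapse_stable_source[OF c] .
  have uwV: "u \<in> iv G" "w \<in> iv G" using stable_tree_edge_mem[OF st e] by auto
  have yz: "y \<in> iv G" "z \<in> iv G" "{y, z} \<in> ied G" "{y, z} \<noteq> {u, w}"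
    using step(2) unfolding adj_in_def by auto
  show ?case
  proof (cases "\<pi> y = \<pi> z")
    case False
    have "{\<pi> y, \<pi> z} \<noteq> {\<pi> u, \<pi> w}"
    proof
      assume "{\<pi> y, \<pi> z} = {\<pi> u, \<pi> w}"
      then consider "\<pi> y = \<pi> u" "\<pi> z = \<pi> w" | "\<pi> y = \<pi> w" "\<pi> z = \<pi> u"
        by (auto simp: doubleton_eq_iff)
      then have "reach_del G {u, w} u w"
      proof cases
        case 1
        then have "reach_del G {u, w} u y" "reach_del G {u, w} z w"
          using collapse_fibre_reach_del[OF c uw] uwV yz(1,2) by simp_all
        then show ?thesis using reach_del_step[OF yz] by (meson reach_del_trans)
      next
        case 2
        then have "reach_del G {u, w} u z" "reach_del G {u, w} y w"
          using collapse_fibre_reach_del[OF c uw] uwV yz(1,2) by simp_all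
        then show ?thesis using reach_del_step[OF yz] by (meson reach_del_sym reach_del_trans)
      qed
      then show False using not_reach_del_edge[OF st e] by simp
    qed
    moreover have "\<pi> y \<in> iv G'" "\<pi> z \<in> iv G'" using collapse_image[OF c] yz(1,2) by blast+
    ultimately have "reach_del G' {\<pi> u, \<pi> w} (\<pi> y) (\<pi> z)"
      using reach_del_step collapse_edge_image[OF c yz(3) False] by metis
    then show ?thesis using step.IH reach_del_trans by metis
  qed (use step.IH in simp)
qed simp

lemma conn_on_star:
  assumes "h \<in> S" and "\<forall>u\<in>S. u = h \<or> {h, u} \<in> E"
  shows "conn_on E S"
proof -
  have "(adj_in E S)\<^sup>*\<^sup>* h u" if "u \<in> S" for u
    using assms that unfolding adj_in_def by (auto intro: r_into_rtranclp)
  then show ?thesis unfolding conn_on_iff_adj_in by (meson adj_in_rtranclp_sym rtranclp_trans)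
qed

lemma not_has_cycle_card:
  assumes "finite V" "card V < 3"
  shows "\<not> has_cycle E V"
proof
  assume "has_cycle E V"
  then obtain cs where "3 \<le> length cs" "distinct cs" "set cs \<subseteq> V"
    unfolding has_cycle_def by blast
  then have "length cs \<le> card V" using assms(1) by (metis card_mono distinct_card)
  with assms(2) \<open>3 \<le> length cs\<close> show False by simp
qed

definition stable_split :: "nat \<Rightarrow> nat set \<Rightarrow> bool" where
  "stable_split n B \<longleftrightarrow> B \<subseteq> {1..n} \<and> 2 \<le> card B \<and> 2 \<le> card ({1..n} - B)"

definition tree2 :: "nat set \<Rightarrow> stree" where
  "tree2 B = \<lparr>iv = {0, 1}, ied = {{0, 1}}, lf = (\<lambda>i. if i \<in> B then 0 else 1)\<rparr>"

lemma iv_tree2 [simp]: "iv (tree2 B) = {0, 1}"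
  and ied_tree2 [simp]: "ied (tree2 B) = {{0, 1}}"
  unfolding tree2_def by simp_all

lemma ell_tree2_0: "B \<subseteq> {1..n} \<Longrightarrow> ell n (tree2 B) 0 = B"
  unfolding ell_def tree2_def by auto

lemma ell_tree2_1: "ell n (tree2 B) 1 = {1..n} - B"
  unfolding ell_def tree2_def by auto

lemma tree2_stable:
  assumes "stable_split n B"
  shows "stable_tree n (tree2 B)"
proof -
  have B: "B \<subseteq> {1..n}" "2 \<le> card B" "2 \<le> card ({1..n} - B)"
    using assms unfolding stable_split_def by auto
  have "{u \<in> {0, 1}. {u, 0} \<in> {{0, 1}}} = {1 :: nat}" "{u \<in> {0, 1}. {u, 1} \<in> {{0, 1}}} = {0 :: nat}"
    by (auto simp: doubleton_eq_iff)
  then have "sdeg n (tree2 B) 0 = 1 + card B" "sdeg n (tree2 B) 1 = 1 + card ({1..n} - B)"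
    unfolding sdeg_def ell_tree2_0[OF B(1)] ell_tree2_1 by simp_all
  moreover have "\<not> has_cycle {{0, 1}} {0 :: nat, 1}" by (rule not_has_cycle_card) auto
  moreover have "conn_on {{0, 1}} {0 :: nat, 1}" by (rule conn_on_star[of 0]) auto
  ultimately show ?thesis using B unfolding stable_tree_def by (auto simp: tree2_def)
qed

lemma branch_collapse:
  assumes st: "stable_tree n G" and e: "{a, b} \<in> ied G"
  shows "collapse n G (tree2 (leaves_in n G (branch G {a, b} a)))
    (\<lambda>x. if x \<in> branch G {a, b} a then 0 else 1)"
    (is "collapse n G (tree2 ?B) ?\<pi>")
proof -
  have ab: "a \<in> iv G" "b \<in> iv G" using stable_tree_edge_mem[OF st e] by auto
  have "2 \<le> card ?B" using two_le_card_leaves_in_branch[OF st e] .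
  moreover have "2 \<le> card ({1..n} - ?B)"
    using leaves_in_branches_compl[OF st e] two_le_card_leaves_in_branch[of n G b a] st e
    by (simp add: insert_commute)
  ultimately have "stable_split n ?B" unfolding stable_split_def leaves_in_def by blast
  have aS: "?\<pi> a = 0" and bS: "?\<pi> b = 1"
    using branches_disjoint[OF st e] branch_self by auto
  have fibres: "{x \<in> iv G. ?\<pi> x = 0} = branch G {a, b} a" "{x \<in> iv G. ?\<pi> x = 1} = branch G {a, b} b"
    using branches_cover[OF st e] branches_disjoint[OF st e] by auto
  show ?thesis
    unfolding collapse_def
  proof (intro conjI ballI)
    show "stable_tree n (tree2 ?B)" using tree2_stable[OF \<open>stable_split n ?B\<close>] .
    show "?\<pi> ` iv G = iv (tree2 ?B)" using ab aS bS by (auto simp: image_iff)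
    show "ied (tree2 ?B) = {{?\<pi> u, ?\<pi> v} | u v. {u, v} \<in> ied G \<and> ?\<pi> u \<noteq> ?\<pi> v}"
      using e aS bS by (auto simp: doubleton_eq_iff split: if_splits)
  next
    fix y assume "y \<in> iv (tree2 ?B)"
    then consider "y = 0" | "y = 1" by auto
    then show "conn_on (ied G) {x \<in> iv G. ?\<pi> x = y}"
    proof cases
      case 1
      show ?thesis unfolding 1 fibres(1) by (rule branch_connected[OF ab(1)])
    next
      case 2
      show ?thesis unfolding 2 fibres(2) by (rule branch_connected[OF ab(2)])
    qed
  next
    fix i assume "i \<in> {1..n}"
    then show "lf (tree2 ?B) i = ?\<pi> (lf G i)" unfolding tree2_def leaves_in_def by simp
  qed (rule st)
qed

lemma extremal_psubset: "extremal n Z \<Longrightarrow> stable_tree n G \<Longrightarrow> Z G \<subset> iv G"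
  unfolding extremal_def by blast

lemma extremal_collapse_iff:
  "extremal n Z \<Longrightarrow> collapse n G G' \<pi> \<Longrightarrow> v' \<in> iv G' \<Longrightarrow>
    v' \<in> Z G' \<longleftrightarrow> {v \<in> iv G. \<pi> v = v'} \<subseteq> Z G"
  unfolding extremal_def by blast

lemma extremal_branch_iff:
  assumes Z: "extremal n Z" and st: "stable_tree n G" and e: "{a, b} \<in> ied G"
  shows "0 \<in> Z (tree2 (leaves_in n G (branch G {a, b} a))) \<longleftrightarrow> branch G {a, b} a \<subseteq> Z G"
proof -
  have "{x \<in> iv G. (if x \<in> branch G {a, b} a then 0 else 1) = (0::nat)} = branch G {a, b} a"
    using branch_subset stable_tree_edge_mem[OF st e] by auto
  then show ?thesis using extremal_collapse_iff[OF Z branch_collapse[OF st e]] by simp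
qed

lemma two_vertex_treeE:
  assumes st: "stable_tree n G" and two: "card (iv G) = 2" and v: "v \<in> iv G"
  obtains w where "w \<noteq> v" "iv G = {v, w}" "ied G = {{v, w}}"
proof -
  obtain x y where xy: "iv G = {x, y}" "x \<noteq> y" using two card_2_iff by metis
  define w where "w = (if v = x then y else x)"
  have w: "w \<noteq> v" "iv G = {v, w}" using xy v unfolding w_def by auto
  have "ied G \<subseteq> {{v, w}}"
  proof
    fix e assume "e \<in> ied G"
    then obtain a b where "e = {a, b}" "a \<noteq> b" "a \<in> iv G" "b \<in> iv G"
      by (rule stable_tree_edge[OF st])
    then show "e \<in> {{v, w}}" using w by (auto simp: insert_commute)
  qed
  moreover have "ied G \<noteq> {}"
  proof -
    have "(adj_in (ied G) (iv G))\<^sup>*\<^sup>* v w"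
      using st w unfolding stable_tree_def conn_on_iff_adj_in by blast
    then obtain y where "adj_in (ied G) (iv G) v y" using w(1) by (metis converse_rtranclpE)
    then show ?thesis unfolding adj_in_def by auto
  qed
  ultimately show ?thesis using that w by blast
qed

lemma branch_single_edge:
  assumes "ied G = {e}"
  shows "branch G e x = {x}"
proof -
  have "x = y" if "reach_del G e x y" for y
  proof -
    have "(adj_in {} (iv G))\<^sup>*\<^sup>* x y" using that assms unfolding reach_del_def by simp
    then show ?thesis by (induction rule: rtranclp_induct) (auto simp: adj_in_def)
  qed
  then show ?thesis unfolding branch_def by auto
qed

lemma leaves_in_singleton: "leaves_in n G {v} = ell n G v"
  unfolding leaves_in_def ell_def by auto

lemma two_vertex_mem_iff:
  assumes Z: "extremal n Z" and st: "stable_tree n G" and two: "card (iv G) = 2" and v: "v \<in> iv G"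
  shows "v \<in> Z G \<longleftrightarrow> 0 \<in> Z (tree2 (ell n G v))"
proof -
  obtain w where e: "ied G = {{v, w}}" using two_vertex_treeE[OF st two v] by metis
  then show ?thesis
    using extremal_branch_iff[OF Z st, of v w] branch_single_edge[OF e] leaves_in_singleton
    by simp
qed

lemma two_vertex_stable_split:
  assumes st: "stable_tree n G" and two: "card (iv G) = 2" and v: "v \<in> iv G"
  shows "stable_split n (ell n G v)"
proof -
  obtain w where e: "ied G = {{v, w}}" using two_vertex_treeE[OF st two v] by metis
  then have e': "ied G = {{w, v}}" by (simp add: insert_commute)
  have vw: "{v, w} \<in> ied G" "{w, v} \<in> ied G" using e e' by simp_all
  note branches = branch_single_edge[OF e, of v] branch_single_edge[OF e', of w]
  have "2 \<le> card (ell n G v)" "2 \<le> card (ell n G w)"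
    using two_le_card_leaves_in_branch[OF st vw(1)] two_le_card_leaves_in_branch[OF st vw(2)]
    unfolding branches leaves_in_singleton .
  moreover have "{1..n} - ell n G v = ell n G w"
    using leaves_in_branches_compl[OF st vw(1)]
    unfolding branches branch_single_edge[OF e, of w] leaves_in_singleton .
  moreover have "ell n G v \<subseteq> {1..n}" unfolding ell_def by blast
  ultimately show ?thesis unfolding stable_split_def by simp
qed

lemma CZ_iff:
  assumes Z: "extremal n Z"
  shows "B \<in> CZ n Z \<longleftrightarrow> stable_split n B \<and> 0 \<in> Z (tree2 B)"
proof
  assume "B \<in> CZ n Z"
  then obtain G v where G: "B = ell n G v" "stable_tree n G" "card (iv G) = 2" "v \<in> Z G"
    unfolding CZ_def by blast
  moreover have v: "v \<in> iv G" using G extremal_psubset[OF Z] by blast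
  ultimately show "stable_split n B \<and> 0 \<in> Z (tree2 B)"
    using two_vertex_stable_split[OF G(2,3) v] two_vertex_mem_iff[OF Z G(2,3) v] by simp
next
  assume B: "stable_split n B \<and> 0 \<in> Z (tree2 B)"
  then have "B = ell n (tree2 B) 0" using ell_tree2_0 unfolding stable_split_def by blast
  moreover have "stable_tree n (tree2 B)" using B tree2_stable by blast
  ultimately show "B \<in> CZ n Z"
    unfolding CZ_def mem_Collect_eq using B by (intro exI[of _ "tree2 B"] exI[of _ 0]) simp
qed

lemma CZ_stable_split: "extremal n Z \<Longrightarrow> B \<in> CZ n Z \<Longrightarrow> stable_split n B"
  using CZ_iff by blast

lemma two_vertex_mem_iff_CZ:
  assumes Z: "extremal n Z" and st: "stable_tree n G" and two: "card (iv G) = 2" and v: "v \<in> iv G"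
  shows "v \<in> Z G \<longleftrightarrow> ell n G v \<in> CZ n Z"
  using CZ_iff[OF Z] two_vertex_stable_split[OF st two v] two_vertex_mem_iff[OF Z st two v] by blast

definition tree3 :: "nat set \<Rightarrow> nat set \<Rightarrow> stree" where
  "tree3 A M = \<lparr>iv = {0, 1, 2}, ied = {{0, 1}, {1, 2}},
     lf = (\<lambda>i. if i \<in> A then 0 else if i \<in> M then 1 else 2)\<rparr>"

lemma iv_tree3 [simp]: "iv (tree3 A M) = {0, 1, 2}"
  and ied_tree3 [simp]: "ied (tree3 A M) = {{0, 1}, {1, 2}}"
  unfolding tree3_def by simp_all

lemma not_has_cycle_path3: "\<not> has_cycle {{0, 1}, {1, 2}} {0 :: nat, 1, 2}"
proof
  assume "has_cycle {{0, 1}, {1, 2}} {0 :: nat, 1, 2}"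
  then obtain cs where cs: "3 \<le> length cs" "distinct cs" "set cs \<subseteq> {0 :: nat, 1, 2}"
    and edges: "\<forall>i < length cs. {cs ! i, cs ! ((i + 1) mod length cs)} \<in> {{0, 1}, {1, 2}}"
    unfolding has_cycle_def by blast
  have "length cs \<le> card {0 :: nat, 1, 2}"
    using cs(2,3) by (metis card_mono distinct_card finite.emptyI finite.insertI)
  with cs(1) have l3: "length cs = 3" by simp
  then have "{cs ! 0, cs ! 1} \<in> {{0, 1}, {1, 2}}" "{cs ! 1, cs ! 2} \<in> {{0, 1}, {1, 2}}"
    "{cs ! 2, cs ! 0} \<in> {{0, 1}, {1, 2}}"
    using edges[rule_format, of 0] edges[rule_format, of 1] edges[rule_format, of 2]
    by (simp_all add: numeral_2_eq_2)
  moreover have "cs ! 0 \<noteq> cs ! 1" "cs ! 1 \<noteq> cs ! 2" "cs ! 0 \<noteq> cs ! 2"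
    using cs(2) l3 by (auto simp: nth_eq_iff_index_eq)
  ultimately show False by (auto simp: doubleton_eq_iff)
qed

lemma conn_on_path3: "conn_on {{0, 1}, {1, 2}} {0 :: nat, 1, 2}"
  by (rule conn_on_star[of 1]) (auto simp: doubleton_eq_iff)

lemma doubleton_mem_edges:
  "u \<noteq> v \<Longrightarrow> u \<in> V \<Longrightarrow> v \<in> V \<Longrightarrow> {u, v} \<in> {e. \<exists>u v. e = {u, v} \<and> u \<noteq> v \<and> u \<in> V \<and> v \<in> V}"
  by blast

lemma tree3_stable:
  assumes A: "A \<subseteq> {1..n}" "2 \<le> card A" and M: "M \<subseteq> {1..n}" "M \<noteq> {}" "A \<inter> M = {}"
    and R: "2 \<le> card ({1..n} - A - M)"
  shows "stable_tree n (tree3 A M)"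
proof -
  have ell: "ell n (tree3 A M) 0 = A" "ell n (tree3 A M) 1 = M" "ell n (tree3 A M) 2 = {1..n} - A - M"
    using A M unfolding ell_def tree3_def by auto
  have nbrs: "{u \<in> {0, 1, 2}. {u, 0} \<in> {{0, 1}, {1, 2}}} = {1 :: nat}"
    "{u \<in> {0, 1, 2}. {u, 1} \<in> {{0, 1}, {1, 2}}} = {0 :: nat, 2}"
    "{u \<in> {0, 1, 2}. {u, 2} \<in> {{0, 1}, {1, 2}}} = {1 :: nat}"
    by (auto simp: doubleton_eq_iff)
  have "sdeg n (tree3 A M) 0 = 1 + card A" "sdeg n (tree3 A M) 1 = 2 + card M"
    "sdeg n (tree3 A M) 2 = 1 + card ({1..n} - A - M)"
    unfolding sdeg_def iv_tree3 ied_tree3 nbrs ell by simp_all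
  moreover have "1 \<le> card M"
    using M finite_subset[of M "{1..n}"] by (simp add: Suc_le_eq card_gt_0_iff)
  ultimately have deg: "3 \<le> sdeg n (tree3 A M) v" if "v \<in> {0, 1, 2}" for v
    using that A R by auto
  show ?thesis
    unfolding stable_tree_def iv_tree3 ied_tree3
  proof (intro conjI ballI deg)
    show "{{0, 1}, {1, 2}} \<subseteq>
        {e. \<exists>u v. e = {u, v} \<and> u \<noteq> v \<and> u \<in> {0, 1, 2} \<and> v \<in> {0 :: nat, 1, 2}}"
      unfolding insert_subset by (intro conjI doubleton_mem_edges empty_subsetI) simp_all
    show "conn_on {{0, 1}, {1, 2}} {0 :: nat, 1, 2}" by (rule conn_on_path3)
    show "\<not> has_cycle {{0, 1}, {1, 2}} {0 :: nat, 1, 2}" by (rule not_has_cycle_path3)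
    show "lf (tree3 A M) i \<in> {0, 1, 2}" for i by (simp add: tree3_def)
  qed simp_all
qed

lemma tree3_branches:
  assumes st: "stable_tree n (tree3 A M)"
  shows "branch (tree3 A M) {0, 1} 0 = {0}" and "branch (tree3 A M) {0, 1} 1 = {1, 2}"
    and "branch (tree3 A M) {1, 2} 1 = {0, 1}"
proof -
  have e10: "{1, 0} = {0, 1 :: nat}" by auto
  have e: "{0, 1} \<in> ied (tree3 A M)" "{1, 2} \<in> ied (tree3 A M)" "{1, 0} \<in> ied (tree3 A M)"
    unfolding e10 by simp_all
  have "reach_del (tree3 A M) {0, 1} 1 2"
    using reach_del_edge[OF st e(2), of "{0, 1}"] by (simp add: doubleton_eq_iff)
  then have b1: "{1, 2} \<subseteq> branch (tree3 A M) {0, 1} 1" unfolding branch_def by simp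
  have "reach_del (tree3 A M) {1, 2} 1 0"
    using reach_del_edge[OF st e(3), of "{1, 2}"] by (simp add: doubleton_eq_iff)
  then have b2: "{0, 1} \<subseteq> branch (tree3 A M) {1, 2} 1" unfolding branch_def by simp
  have b0: "{0} \<subseteq> branch (tree3 A M) {0, 1} 0" "{2} \<subseteq> branch (tree3 A M) {1, 2} 2"
    by (simp_all add: branch_self)
  have cover: "iv (tree3 A M) \<subseteq> {0} \<union> {1, 2}" "iv (tree3 A M) \<subseteq> {1, 2} \<union> {0}"
    "iv (tree3 A M) \<subseteq> {0, 1} \<union> {2}"
    by auto
  show "branch (tree3 A M) {0, 1} 0 = {0}" using branches_eqI[OF st e(1) b0(1) b1 cover(1)] .
  show "branch (tree3 A M) {0, 1} 1 = {1, 2}"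
    using branches_eqI[OF st e(3), unfolded e10, OF b1 b0(1) cover(2)] .
  show "branch (tree3 A M) {1, 2} 1 = {0, 1}" using branches_eqI[OF st e(2) b2 b0(2) cover(3)] .
qed

lemma extremal_tree3:
  assumes Z: "extremal n Z"
    and A: "A \<subseteq> {1..n}" "2 \<le> card A" and M: "M \<subseteq> {1..n}" "M \<noteq> {}" "A \<inter> M = {}"
    and R: "2 \<le> card ({1..n} - A - M)"
  shows "0 \<in> Z (tree2 A) \<longleftrightarrow> 0 \<in> Z (tree3 A M)"
    and "0 \<in> Z (tree2 ({1..n} - A)) \<longleftrightarrow> {1, 2} \<subseteq> Z (tree3 A M)"
    and "0 \<in> Z (tree2 (A \<union> M)) \<longleftrightarrow> {0, 1} \<subseteq> Z (tree3 A M)"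
proof -
  have st: "stable_tree n (tree3 A M)" using tree3_stable[OF A M R] .
  have leaves: "leaves_in n (tree3 A M) {0} = A" "leaves_in n (tree3 A M) {1, 2} = {1..n} - A"
    "leaves_in n (tree3 A M) {0, 1} = A \<union> M"
    using A M unfolding leaves_in_def tree3_def by auto
  have e10: "{1, 0} = {0, 1 :: nat}" by auto
  show "0 \<in> Z (tree2 A) \<longleftrightarrow> 0 \<in> Z (tree3 A M)"
    using extremal_branch_iff[OF Z st, of 0 1] unfolding tree3_branches[OF st] leaves by simp
  show "0 \<in> Z (tree2 ({1..n} - A)) \<longleftrightarrow> {1, 2} \<subseteq> Z (tree3 A M)"
    using extremal_branch_iff[OF Z st, of 1 0, unfolded e10]
    unfolding tree3_branches[OF st] leaves by simp
  show "0 \<in> Z (tree2 (A \<union> M)) \<longleftrightarrow> {0, 1} \<subseteq> Z (tree3 A M)"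
    using extremal_branch_iff[OF Z st, of 1 2] unfolding tree3_branches[OF st] leaves by simp
qed

lemma CZ_down_closed:
  assumes Z: "extremal n Z" and B: "B \<in> CZ n Z" and A: "stable_split n A" and AB: "A \<subseteq> B"
  shows "A \<in> CZ n Z"
proof (cases "A = B")
  case False
  have split_B: "stable_split n B" and "0 \<in> Z (tree2 B)" using B CZ_iff[OF Z] by auto
  have "{1..n} - A - (B - A) = {1..n} - B" "A \<union> (B - A) = B" using AB by blast+
  moreover from this have conds: "A \<subseteq> {1..n}" "2 \<le> card A" "B - A \<subseteq> {1..n}" "B - A \<noteq> {}"
    "A \<inter> (B - A) = {}" "2 \<le> card ({1..n} - A - (B - A))"
    using A split_B AB False unfolding stable_split_def by auto
  ultimately have "0 \<in> Z (tree3 A (B - A))"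
    using extremal_tree3(3)[OF Z conds] \<open>0 \<in> Z (tree2 B)\<close> by simp
  then have "0 \<in> Z (tree2 A)" using extremal_tree3(1)[OF Z conds] by simp
  then show ?thesis using CZ_iff[OF Z] A by simp
qed (use B in simp)

lemma CZ_no_cover:
  assumes Z: "extremal n Z" and B1: "B1 \<in> CZ n Z" and B2: "B2 \<in> CZ n Z"
  shows "B1 \<union> B2 \<noteq> {1..n}"
proof
  assume cover: "B1 \<union> B2 = {1..n}"
  have B1': "stable_split n B1" "0 \<in> Z (tree2 B1)" and B2': "stable_split n B2" "0 \<in> Z (tree2 B2)"
    using B1 B2 CZ_iff[OF Z] by auto
  show False
  proof (cases "B1 \<inter> B2 = {}")
    case True
    then have "ell n (tree2 B1) 1 = B2" using cover ell_tree2_1 by blast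
    then have "1 \<in> Z (tree2 B1)"
      using two_vertex_mem_iff_CZ[OF Z tree2_stable[OF B1'(1)], of 1] B2 by simp
    then have "iv (tree2 B1) \<subseteq> Z (tree2 B1)" using B1'(2) by simp
    then show False using extremal_psubset[OF Z tree2_stable[OF B1'(1)]] by blast
  next
    case False
    define A where "A = {1..n} - B2"
    define M where "M = B1 \<inter> B2"
    have eqs: "A \<union> M = B1" "{1..n} - A = B2" "{1..n} - A - M = {1..n} - B1"
      using cover unfolding A_def M_def by blast+
    have conds: "A \<subseteq> {1..n}" "2 \<le> card A" "M \<subseteq> {1..n}" "M \<noteq> {}" "A \<inter> M = {}"
      "2 \<le> card ({1..n} - A - M)"
      using B1'(1) B2'(1) False cover eqs(3) unfolding stable_split_def by (auto simp: A_def M_def)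
    then have "{0, 1} \<subseteq> Z (tree3 A M)" "{1, 2} \<subseteq> Z (tree3 A M)"
      using extremal_tree3(2,3)[OF Z conds] B1'(2) B2'(2) eqs by simp_all
    then have "iv (tree3 A M) \<subseteq> Z (tree3 A M)" by auto
    then show False using extremal_psubset[OF Z tree3_stable[OF conds]] by blast
  qed
qed

lemma hyp_of_in_simple_intersecting_families:
  assumes Z: "extremal n Z"
  shows "hyp_of n Z \<in> simple_intersecting_families n"
proof -
  have bounds: "E \<subseteq> {1..n} \<and> 2 \<le> card E \<and> card E \<le> n - 2" if E: "E \<in> hyp_of n Z" for E
  proof -
    obtain B where B: "E = {1..n} - B" "B \<in> CZ n Z" using E unfolding hyp_of_def by blast
    then have "B \<subseteq> {1..n}" "2 \<le> card B" "2 \<le> card ({1..n} - B)"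
      using CZ_stable_split[OF Z] unfolding stable_split_def by auto
    moreover have "card ({1..n} - B) = n - card B"
      using \<open>B \<subseteq> {1..n}\<close> by (simp add: card_Diff_subset finite_subset)
    ultimately show ?thesis using B(1) by simp
  qed
  have antichain: "E1 = E2"
    if E: "E1 \<in> hyp_of n Z" "E2 \<in> hyp_of n Z" and sub: "E1 \<subseteq> E2" for E1 E2
  proof -
    obtain B1 B2 where B: "E1 = {1..n} - B1" "E2 = {1..n} - B2" "B1 \<in> CZ n Z" "B2 \<in> CZ n Z"
      and max: "\<forall>B'\<in>CZ n Z. \<not> B2 \<subset> B'"
      using E unfolding hyp_of_def by blast
    have "B1 \<subseteq> {1..n}" "B2 \<subseteq> {1..n}"
      using B(3,4) CZ_stable_split[OF Z] unfolding stable_split_def by auto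
    with sub B(1,2) have "B2 \<subseteq> B1" by blast
    then have "B2 = B1" using max B(3) by blast
    then show "E1 = E2" using B(1,2) by simp
  qed
  have intersecting: "E1 \<inter> E2 \<noteq> {}" if E: "E1 \<in> hyp_of n Z" "E2 \<in> hyp_of n Z" for E1 E2
  proof
    assume disjoint: "E1 \<inter> E2 = {}"
    obtain B1 B2 where B: "E1 = {1..n} - B1" "E2 = {1..n} - B2" "B1 \<in> CZ n Z" "B2 \<in> CZ n Z"
      using E unfolding hyp_of_def by blast
    have "B1 \<subseteq> {1..n}" "B2 \<subseteq> {1..n}"
      using B(3,4) CZ_stable_split[OF Z] unfolding stable_split_def by auto
    with disjoint B(1,2) have "B1 \<union> B2 = {1..n}" by blast
    then show False using CZ_no_cover[OF Z B(3,4)] by blast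
  qed
  show ?thesis unfolding simple_intersecting_families_def mem_Collect_eq
    using bounds antichain intersecting by blast
qed

definition avoiding_splits :: "nat \<Rightarrow> nat set set \<Rightarrow> nat set set" where
  "avoiding_splits n F = {B. stable_split n B \<and> (\<exists>A\<in>F. A \<inter> B = {})}"

lemma CZ_eq_avoiding_splits:
  assumes Z: "extremal n Z"
  shows "CZ n Z = avoiding_splits n (hyp_of n Z)"
proof
  show "CZ n Z \<subseteq> avoiding_splits n (hyp_of n Z)"
  proof
    fix B assume B: "B \<in> CZ n Z"
    have "CZ n Z \<subseteq> Pow {1..n}" using CZ_stable_split[OF Z] unfolding stable_split_def by blast
    then have "finite (CZ n Z)" by (simp add: finite_subset)
    then obtain B' where B': "B' \<in> CZ n Z" "B \<subseteq> B'" "\<forall>C\<in>CZ n Z. B' \<subseteq> C \<longrightarrow> B' = C"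
      using finite_has_maximal2 B by blast
    then have "{1..n} - B' \<in> hyp_of n Z" unfolding hyp_of_def by blast
    moreover have "({1..n} - B') \<inter> B = {}" using B'(2) by blast
    ultimately show "B \<in> avoiding_splits n (hyp_of n Z)"
      using CZ_stable_split[OF Z B] unfolding avoiding_splits_def by blast
  qed
  show "avoiding_splits n (hyp_of n Z) \<subseteq> CZ n Z"
  proof
    fix B assume "B \<in> avoiding_splits n (hyp_of n Z)"
    then obtain B' where "stable_split n B" "B' \<in> CZ n Z" "({1..n} - B') \<inter> B = {}"
      unfolding avoiding_splits_def hyp_of_def by blast
    moreover from this have "B \<subseteq> B'" unfolding stable_split_def by blast
    ultimately show "B \<in> CZ n Z" using CZ_down_closed[OF Z] by blast
  qed
qed

lemma smooth_extremal_eq_via_CZ: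
  assumes Z: "extremal n Z" "smooth n Z" and st: "stable_tree n G"
  shows "Z G = {v \<in> iv G. \<exists>G' \<pi>. card (iv G') = 2 \<and> collapse n G G' \<pi> \<and> ell n G' (\<pi> v) \<in> CZ n Z}"
    (is "_ = ?R")
proof (intro equalityI subsetI)
  fix v assume v: "v \<in> Z G"
  then obtain G' \<pi> where G': "card (iv G') = 2" "collapse n G G' \<pi>" "\<pi> v \<in> Z G'"
    using Z(2) st unfolding smooth_def by blast
  moreover have "v \<in> iv G" using v extremal_psubset[OF Z(1) st] by blast
  moreover have "\<pi> v \<in> iv G'" using G'(3) extremal_psubset[OF Z(1) collapse_stable_target[OF G'(2)]]
    by blast
  ultimately show "v \<in> ?R"
    using two_vertex_mem_iff_CZ[OF Z(1) collapse_stable_target[OF G'(2)] G'(1)] by blast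
next
  fix v assume "v \<in> ?R"
  then obtain G' \<pi> where v: "v \<in> iv G" and G': "card (iv G') = 2" "collapse n G G' \<pi>"
    "ell n G' (\<pi> v) \<in> CZ n Z"
    by blast
  have "\<pi> v \<in> iv G'" using collapse_image[OF G'(2)] v by blast
  then have "\<pi> v \<in> Z G'"
    using two_vertex_mem_iff_CZ[OF Z(1) collapse_stable_target[OF G'(2)] G'(1)] G'(3) by blast
  then show "v \<in> Z G"
    using extremal_collapse_iff[OF Z(1) G'(2) \<open>\<pi> v \<in> iv G'\<close>] v by blast
qed

lemma inj_on_hyp_of: "inj_on (hyp_of n) (smooth_extremal_assignments n)"
proof (rule inj_onI)
  fix Z1 Z2
  assume "Z1 \<in> smooth_extremal_assignments n" "Z2 \<in> smooth_extremal_assignments n"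
    and eq: "hyp_of n Z1 = hyp_of n Z2"
  then have Z1: "extremal n Z1" "smooth n Z1" "\<And>G. \<not> stable_tree n G \<Longrightarrow> Z1 G = {}"
    and Z2: "extremal n Z2" "smooth n Z2" "\<And>G. \<not> stable_tree n G \<Longrightarrow> Z2 G = {}"
    unfolding smooth_extremal_assignments_def by auto
  have "CZ n Z1 = CZ n Z2" using CZ_eq_avoiding_splits[OF Z1(1)] CZ_eq_avoiding_splits[OF Z2(1)] eq
    by simp
  then have "Z1 G = Z2 G" for G
    using smooth_extremal_eq_via_CZ[OF Z1(1,2)] smooth_extremal_eq_via_CZ[OF Z2(1,2)] Z1(3) Z2(3)
    by (cases "stable_tree n G") simp_all
  then show "Z1 = Z2" by blast
qed

definition avoided_branch :: "nat \<Rightarrow> nat set set \<Rightarrow> stree \<Rightarrow> nat set \<Rightarrow> bool" where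
  "avoided_branch n F G S \<longleftrightarrow> is_branch G S \<and> (\<exists>A\<in>F. A \<inter> leaves_in n G S = {})"

lemma avoided_branch_mono:
  "avoided_branch n F G S \<Longrightarrow> is_branch G T \<Longrightarrow> T \<subseteq> S \<Longrightarrow> avoided_branch n F G T"
  unfolding avoided_branch_def leaves_in_def by blast

lemma finite_avoided_branch: "stable_tree n G \<Longrightarrow> finite {S. avoided_branch n F G S}"
  using finite_is_branch unfolding avoided_branch_def by (rule rev_finite_subset) auto

lemma avoided_branches_not_cover:
  assumes st: "stable_tree n G" and inter: "\<forall>A\<in>F. \<forall>B\<in>F. A \<inter> B \<noteq> {}"
    and subs: "\<forall>A\<in>F. A \<subseteq> {1..n}" and S: "avoided_branch n F G S" and T: "avoided_branch n F G T"
  shows "\<not> iv G \<subseteq> S \<union> T"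
proof
  assume cover: "iv G \<subseteq> S \<union> T"
  obtain A1 A2 where A: "A1 \<in> F" "A1 \<inter> leaves_in n G S = {}" "A2 \<in> F" "A2 \<inter> leaves_in n G T = {}"
    using S T unfolding avoided_branch_def by blast
  then obtain i where i: "i \<in> A1" "i \<in> A2" using inter by blast
  then have "i \<in> {1..n}" using subs A by blast
  then have "lf G i \<in> S \<union> T" using cover stable_tree_lf[OF st] by blast
  then show False using A i \<open>i \<in> {1..n}\<close> unfolding leaves_in_def by blast
qed

lemma adj_in_rtranclp_leaving_branch:
  assumes "(adj_in (ied G) W)\<^sup>*\<^sup>* x y" "x \<in> branch G {a, b} a" "y \<notin> branch G {a, b} a"
    and W: "W \<subseteq> iv G"
  shows "a \<in> W \<and> b \<in> W"
  using assms(1-3)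
proof (induction rule: rtranclp_induct)
  case (step y z)
  show ?case
  proof (cases "y \<in> branch G {a, b} a")
    case True
    have yz: "y \<in> W" "z \<in> W" "{y, z} \<in> ied G" using step(2) unfolding adj_in_def by auto
    have "{y, z} = {a, b}"
    proof (rule ccontr)
      assume "{y, z} \<noteq> {a, b}"
      moreover have "y \<in> iv G" "z \<in> iv G" using yz W by auto
      ultimately have "reach_del G {a, b} y z" using reach_del_step yz(3) by metis
      then show False using step(5) True unfolding branch_def using reach_del_trans by blast
    qed
    then show ?thesis using yz by (auto simp: doubleton_eq_iff)
  next
    case False
    then show ?thesis using step.IH step.prems(1) by blast
  qed
qed simp

lemma avoided_branch_psubset:
  assumes st: "stable_tree n G" and inter: "\<forall>A\<in>F. \<forall>B\<in>F. A \<inter> B \<noteq> {}"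
    and subs: "\<forall>A\<in>F. A \<subseteq> {1..n}" and e: "{a, b} \<in> ied G"
    and S: "avoided_branch n F G (branch G {a, b} a)" and T: "avoided_branch n F G T" "b \<in> T"
  shows "branch G {a, b} a \<subset> T"
proof -
  obtain c d where cd: "{c, d} \<in> ied G" "T = branch G {c, d} c"
    using T(1) is_branchE[OF st] unfolding avoided_branch_def by metis
  have Tb: "T = branch G {c, d} b" using T(2) cd(2) branch_eq unfolding branch_def by blast
  have not_cover: "\<not> branch G {a, b} b \<subseteq> T"
    using avoided_branches_not_cover[OF st inter subs S T(1)] branches_cover[OF st e] by blast
  have ne: "{c, d} \<noteq> {a, b}"
  proof
    assume "{c, d} = {a, b}"
    then have "T = branch G {a, b} b" using Tb by simp
    then show False using not_cover by simp
  qed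
  consider "{c, d} \<subseteq> branch G {a, b} a" | "{c, d} \<subseteq> branch G {a, b} b"
    using edge_in_one_branch[OF st e cd(1) ne] by blast
  then have "branch G {a, b} a \<subseteq> T"
  proof cases
    case 1
    have "branch G {a, b} b \<subseteq> branch G {c, d} a" using branch_nested[OF st e cd(1) ne 1] .
    moreover have "branch G {c, d} a = branch G {c, d} b"
      using branch_eq reach_del_edge[OF st e] ne by metis
    ultimately show ?thesis using not_cover Tb by simp
  next
    case 2
    have ba: "{b, a} = {a, b}" by blast
    have "branch G {b, a} a \<subseteq> branch G {c, d} b"
      using branch_nested[OF st e[folded ba] cd(1) ne[folded ba] 2[folded ba]] .
    then show ?thesis unfolding ba Tb .
  qed
  moreover have "b \<notin> branch G {a, b} a" using branches_disjoint[OF st e] branch_self by blast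
  ultimately show ?thesis using T(2) by blast
qed

(* Helly-type step: a maximal avoided branch meeting W cannot be left by W, since W would cross
   its edge and the avoided branch at the far endpoint would be strictly larger. *)
lemma avoided_branch_cover_connected:
  assumes st: "stable_tree n G" and inter: "\<forall>A\<in>F. \<forall>B\<in>F. A \<inter> B \<noteq> {}"
    and subs: "\<forall>A\<in>F. A \<subseteq> {1..n}"
    and W: "W \<subseteq> iv G" "W \<noteq> {}" "conn_on (ied G) W"
    and cover: "\<forall>w\<in>W. \<exists>S. avoided_branch n F G S \<and> w \<in> S"
  shows "\<exists>S. avoided_branch n F G S \<and> W \<subseteq> S"
proof -
  define X where "X = {S. avoided_branch n F G S \<and> S \<inter> W \<noteq> {}}"
  have "finite X" using finite_avoided_branch[OF st] unfolding X_def by (rule rev_finite_subset) blast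
  moreover have "X \<noteq> {}" using W(2) cover unfolding X_def by blast
  ultimately obtain S where S: "avoided_branch n F G S" "S \<inter> W \<noteq> {}"
    and max: "\<forall>T\<in>X. S \<subseteq> T \<longrightarrow> S = T"
    using finite_has_maximal[of X] unfolding X_def by blast
  obtain a b where ab: "{a, b} \<in> ied G" "S = branch G {a, b} a"
    using S(1) is_branchE[OF st] unfolding avoided_branch_def by metis
  show ?thesis
  proof (rule ccontr)
    assume "\<nexists>S. avoided_branch n F G S \<and> W \<subseteq> S"
    then obtain w1 w2 where w: "w1 \<in> W" "w1 \<in> S" "w2 \<in> W" "w2 \<notin> S" using S by blast
    then have "(adj_in (ied G) W)\<^sup>*\<^sup>* w1 w2" using W(3) unfolding conn_on_iff_adj_in by blast
    then have "b \<in> W" using adj_in_rtranclp_leaving_branch[OF _ _ _ W(1)] w ab(2) by blast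
    then obtain T where T: "avoided_branch n F G T" "b \<in> T" using cover by blast
    then have "S \<subset> T" using avoided_branch_psubset[OF st inter subs ab(1)] S(1) ab(2) by blast
    moreover have "T \<in> X" using T \<open>b \<in> W\<close> unfolding X_def by blast
    ultimately show False using max by blast
  qed
qed

lemma branch_inside_branch:
  assumes st: "stable_tree n G" and e: "{a, b} \<in> ied G" and f: "{c, d} \<in> ied G" "{c, d} \<noteq> {a, b}"
    and c: "c \<in> branch G {a, b} a" and a: "a \<in> branch G {c, d} d"
  shows "branch G {c, d} c \<subseteq> branch G {a, b} a"
proof -
  have "reach_del G {a, b} c d" using reach_del_edge[OF st f] .
  then have "{c, d} \<subseteq> branch G {a, b} a" using c unfolding branch_def using reach_del_trans by blast
  then have "branch G {a, b} b \<subseteq> branch G {c, d} a" by (rule branch_nested[OF st e f])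
  moreover have "reach_del G {c, d} d a" using a unfolding branch_def by simp
  then have "branch G {c, d} d = branch G {c, d} a" by (rule branch_eq)
  ultimately show ?thesis
    using branches_disjoint[OF st f(1)] branches_cover[OF st f(1)] branches_cover[OF st e] by blast
qed

lemma avoided_branch_shrink:
  assumes st: "stable_tree n G" and W: "W \<subseteq> iv G" "W \<noteq> {}" "conn_on (ied G) W"
    and e: "{a, b} \<in> ied G" and S: "avoided_branch n F G (branch G {a, b} a)"
    and WS: "W \<subseteq> branch G {a, b} a" and a: "a \<notin> W"
  shows "\<exists>T. avoided_branch n F G T \<and> W \<subseteq> T \<and> T \<subset> branch G {a, b} a"
proof -
  obtain w where "w \<in> W" using W(2) by blast
  then have "reach_del G {a, b} w a" using WS reach_del_sym unfolding branch_def by blast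
  then obtain c d where cd: "c \<in> W" "d \<notin> W" "adj_in (ied G - {{a, b}}) (iv G) c d"
    and outside: "(\<lambda>u v. adj_in (ied G - {{a, b}}) (iv G) u v \<and> u \<notin> W \<and> v \<notin> W)\<^sup>*\<^sup>* d a"
    using rtranclp_exit[of _ w a W] \<open>w \<in> W\<close> a unfolding reach_del_def by blast
  have f: "{c, d} \<in> ied G" "{c, d} \<noteq> {a, b}" using cd(3) unfolding adj_in_def by auto
  have "adj_in (ied G - {{c, d}}) (iv G) u v"
    if "adj_in (ied G - {{a, b}}) (iv G) u v \<and> u \<notin> W \<and> v \<notin> W" for u v
    using that cd(1) unfolding adj_in_def by (auto simp: doubleton_eq_iff)
  then have "reach_del G {c, d} d a"
    unfolding reach_del_def by (rule mono_rtranclp[rule_format, OF _ outside])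
  then have "a \<in> branch G {c, d} d" unfolding branch_def by simp
  then have "a \<notin> branch G {c, d} c" using branches_disjoint[OF st f(1)] by blast
  moreover have sub: "branch G {c, d} c \<subseteq> branch G {a, b} a"
    using branch_inside_branch[OF st e f] cd(1) WS \<open>a \<in> branch G {c, d} d\<close> by blast
  moreover have "a \<in> branch G {a, b} a" by (rule branch_self)
  moreover have "W \<subseteq> branch G {c, d} c" using connected_subset_branch[OF W(1,3) cd(1,2)] .
  moreover have "avoided_branch n F G (branch G {c, d} c)"
    using avoided_branch_mono[OF S is_branchI[OF f(1)] sub] .
  ultimately show ?thesis by blast
qed

lemma avoided_branch_exit_edge:
  assumes st: "stable_tree n G" and W: "W \<subseteq> iv G" "W \<noteq> {}" "conn_on (ied G) W"
    and ex: "\<exists>S. avoided_branch n F G S \<and> W \<subseteq> S"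
  shows "\<exists>a b. {a, b} \<in> ied G \<and> a \<in> W \<and> b \<notin> W \<and> W \<subseteq> branch G {a, b} a
    \<and> avoided_branch n F G (branch G {a, b} a)"
proof -
  define X where "X = {S. avoided_branch n F G S \<and> W \<subseteq> S}"
  have "finite X" using finite_avoided_branch[OF st] unfolding X_def by (rule rev_finite_subset) blast
  moreover have "X \<noteq> {}" using ex unfolding X_def by blast
  ultimately obtain S where S: "avoided_branch n F G S" "W \<subseteq> S"
    and min: "\<forall>T\<in>X. T \<subseteq> S \<longrightarrow> S = T"
    using finite_has_minimal[of X] unfolding X_def by blast
  obtain a b where ab: "{a, b} \<in> ied G" "S = branch G {a, b} a"
    using S(1) is_branchE[OF st] unfolding avoided_branch_def by metis
  have "b \<notin> S" using branches_disjoint[OF st ab(1)] ab(2) branch_self by blast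
  have "a \<in> W"
  proof (rule ccontr)
    assume "a \<notin> W"
    then obtain T where "avoided_branch n F G T" "W \<subseteq> T" "T \<subset> S"
      using avoided_branch_shrink[OF st W ab(1)] S ab(2) by blast
    then show False using min unfolding X_def by blast
  qed
  then show ?thesis using ab S \<open>b \<notin> S\<close> by blast
qed

lemma collapse_edge_lift:
  assumes c: "collapse n G G' \<pi>" and e: "{a', b'} \<in> ied G'"
  obtains u w where "{u, w} \<in> ied G" "\<pi> u = a'" "\<pi> w = b'"
proof -
  obtain u0 w0 where uw0: "{a', b'} = {\<pi> u0, \<pi> w0}" "{u0, w0} \<in> ied G"
    using e collapse_ied[OF c] by blast
  then consider "\<pi> u0 = a'" "\<pi> w0 = b'" | "\<pi> w0 = a'" "\<pi> u0 = b'"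
    by (auto simp: doubleton_eq_iff)
  then show ?thesis
  proof cases
    case 1
    then show ?thesis using that uw0(2) by blast
  next
    case 2
    moreover have "{w0, u0} \<in> ied G" using uw0(2) by (simp add: insert_commute)
    ultimately show ?thesis using that by blast
  qed
qed

lemma collapse_branch_iff:
  assumes c: "collapse n G G' \<pi>" and e: "{u, w} \<in> ied G" and uw: "\<pi> u \<noteq> \<pi> w"
    and x: "x \<in> iv G"
  shows "\<pi> x \<in> branch G' {\<pi> u, \<pi> w} (\<pi> u) \<longleftrightarrow> x \<in> branch G {u, w} u"
proof
  assume "x \<in> branch G {u, w} u"
  then show "\<pi> x \<in> branch G' {\<pi> u, \<pi> w} (\<pi> u)"
    using collapse_reach_del_image[OF c e uw] unfolding branch_def by simp
next
  assume img: "\<pi> x \<in> branch G' {\<pi> u, \<pi> w} (\<pi> u)"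
  show "x \<in> branch G {u, w} u"
  proof (rule ccontr)
    assume "x \<notin> branch G {u, w} u"
    then have "x \<in> branch G {u, w} w"
      using branches_cover[OF collapse_stable_source[OF c] e] x by blast
    then have "\<pi> x \<in> branch G' {\<pi> u, \<pi> w} (\<pi> w)"
      using collapse_reach_del_image[OF c e uw] unfolding branch_def by simp
    then show False
      using img branches_disjoint[OF collapse_stable_target[OF c] collapse_edge_image[OF c e uw]]
      by blast
  qed
qed

lemma collapse_avoided_branch_iff:
  assumes c: "collapse n G G' \<pi>" and e: "{u, w} \<in> ied G" and uw: "\<pi> u \<noteq> \<pi> w"
  shows "avoided_branch n F G' (branch G' {\<pi> u, \<pi> w} (\<pi> u)) \<longleftrightarrow>
    avoided_branch n F G (branch G {u, w} u)"
proof -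
  have "leaves_in n G' (branch G' {\<pi> u, \<pi> w} (\<pi> u)) = leaves_in n G (branch G {u, w} u)"
    using collapse_branch_iff[OF c e uw] collapse_lf[OF c]
      stable_tree_lf[OF collapse_stable_source[OF c]]
    unfolding leaves_in_def by auto
  then show ?thesis
    using is_branchI[OF e] is_branchI[OF collapse_edge_image[OF c e uw]]
    unfolding avoided_branch_def by simp
qed

lemma avoided_branch_pullback:
  assumes c: "collapse n G G' \<pi>" and S': "avoided_branch n F G' S'" "\<pi> v \<in> S'"
    and v: "v \<in> iv G"
  shows "\<exists>S. avoided_branch n F G S \<and> v \<in> S"
proof -
  have st': "stable_tree n G'" using collapse_stable_target[OF c] .
  obtain a' b' where ab': "{a', b'} \<in> ied G'" "a' \<noteq> b'" "S' = branch G' {a', b'} a'"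
    using S'(1) is_branchE[OF st'] unfolding avoided_branch_def by metis
  obtain u w where uw: "{u, w} \<in> ied G" "\<pi> u = a'" "\<pi> w = b'"
    using collapse_edge_lift[OF c ab'(1)] .
  then have "\<pi> u \<noteq> \<pi> w" using ab'(2) by simp
  then have "avoided_branch n F G (branch G {u, w} u)" "v \<in> branch G {u, w} u"
    using collapse_avoided_branch_iff[OF c uw(1)] collapse_branch_iff[OF c uw(1) _ v] S' ab'(3) uw(2,3)
    by auto
  then show ?thesis by blast
qed

lemma avoided_branch_pushforward:
  assumes c: "collapse n G G' \<pi>" and inter: "\<forall>A\<in>F. \<forall>B\<in>F. A \<inter> B \<noteq> {}"
    and subs: "\<forall>A\<in>F. A \<subseteq> {1..n}" and v': "v' \<in> iv G'"
    and fibre: "\<forall>v\<in>iv G. \<pi> v = v' \<longrightarrow> (\<exists>S. avoided_branch n F G S \<and> v \<in> S)"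
  shows "\<exists>S'. avoided_branch n F G' S' \<and> v' \<in> S'"
proof -
  have st: "stable_tree n G" using collapse_stable_source[OF c] .
  define W where "W = {v \<in> iv G. \<pi> v = v'}"
  obtain x where "x \<in> iv G" "\<pi> x = v'" using collapse_image[OF c] v' by (metis imageE)
  then have W: "W \<subseteq> iv G" "W \<noteq> {}" "conn_on (ied G) W"
    using collapse_fibre_connected[OF c v'] unfolding W_def by auto
  moreover have "\<forall>w\<in>W. \<exists>S. avoided_branch n F G S \<and> w \<in> S" using fibre unfolding W_def by blast
  ultimately have "\<exists>S. avoided_branch n F G S \<and> W \<subseteq> S"
    by (rule avoided_branch_cover_connected[OF st inter subs])
  then obtain a b where ab: "{a, b} \<in> ied G" "a \<in> W" "b \<notin> W"
    "avoided_branch n F G (branch G {a, b} a)"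
    using avoided_branch_exit_edge[OF st W] by blast
  then have "\<pi> a = v'" "\<pi> b \<noteq> v'" using stable_tree_edge_mem[OF st ab(1)] unfolding W_def by auto
  then have "avoided_branch n F G' (branch G' {\<pi> a, \<pi> b} (\<pi> a))"
    using collapse_avoided_branch_iff[OF c ab(1)] ab(4) by simp
  then show ?thesis using branch_self[of "\<pi> a"] \<open>\<pi> a = v'\<close> by blast
qed

definition family_assignment :: "nat \<Rightarrow> nat set set \<Rightarrow> stree \<Rightarrow> nat set" where
  "family_assignment n F G =
     (if stable_tree n G then {v \<in> iv G. \<exists>S. avoided_branch n F G S \<and> v \<in> S} else {})"

lemma mem_family_assignment:
  "stable_tree n G \<Longrightarrow>
    v \<in> family_assignment n F G \<longleftrightarrow> v \<in> iv G \<and> (\<exists>S. avoided_branch n F G S \<and> v \<in> S)"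
  unfolding family_assignment_def by simp

lemma family_assignment_extremal:
  assumes inter: "\<forall>A\<in>F. \<forall>B\<in>F. A \<inter> B \<noteq> {}" and subs: "\<forall>A\<in>F. A \<subseteq> {1..n}"
  shows "extremal n (family_assignment n F)"
  unfolding extremal_def
proof (intro conjI allI impI ballI)
  fix G assume st: "stable_tree n G"
  show "family_assignment n F G \<subseteq> iv G" using mem_family_assignment[OF st] by blast
  show "family_assignment n F G \<noteq> iv G"
  proof
    assume "family_assignment n F G = iv G"
    then have "\<forall>v\<in>iv G. \<exists>S. avoided_branch n F G S \<and> v \<in> S"
      using mem_family_assignment[OF st] by blast
    moreover have "iv G \<noteq> {}" "conn_on (ied G) (iv G)" using st unfolding stable_tree_def by auto
    ultimately obtain S where S: "avoided_branch n F G S" "iv G \<subseteq> S"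
      using avoided_branch_cover_connected[OF st inter subs subset_refl] by blast
    then obtain a b where "{a, b} \<in> ied G" "b \<in> iv G" "S = branch G {a, b} a"
      using is_branchE[OF st] unfolding avoided_branch_def by metis
    then show False using S(2) branches_disjoint[OF st] branch_self by blast
  qed
next
  fix G G' \<pi> v' assume c: "collapse n G G' \<pi>" and v': "v' \<in> iv G'"
  note mem = mem_family_assignment[OF collapse_stable_source[OF c]]
    mem_family_assignment[OF collapse_stable_target[OF c]]
  show "v' \<in> family_assignment n F G' \<longleftrightarrow> {v \<in> iv G. \<pi> v = v'} \<subseteq> family_assignment n F G"
  proof
    assume "v' \<in> family_assignment n F G'"
    then show "{v \<in> iv G. \<pi> v = v'} \<subseteq> family_assignment n F G"
      using avoided_branch_pullback[OF c] mem by auto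
  next
    assume "{v \<in> iv G. \<pi> v = v'} \<subseteq> family_assignment n F G"
    then have "\<forall>v\<in>iv G. \<pi> v = v' \<longrightarrow> (\<exists>S. avoided_branch n F G S \<and> v \<in> S)" using mem(1) by blast
    then show "v' \<in> family_assignment n F G'"
      using avoided_branch_pushforward[OF c inter subs v'] v' mem(2) by blast
  qed
qed

lemma family_assignment_smooth: "smooth n (family_assignment n F)"
  unfolding smooth_def
proof (intro allI impI ballI)
  fix G v assume st: "stable_tree n G" and "v \<in> family_assignment n F G"
  then obtain S where S: "avoided_branch n F G S" "v \<in> S"
    using mem_family_assignment[OF st] by blast
  then obtain a b where ab: "{a, b} \<in> ied G" "S = branch G {a, b} a"
    using is_branchE[OF st] unfolding avoided_branch_def by metis
  define \<pi> :: "nat \<Rightarrow> nat" where "\<pi> = (\<lambda>x. if x \<in> branch G {a, b} a then 0 else 1)"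
  define G' where "G' = tree2 (leaves_in n G (branch G {a, b} a))"
  have c: "collapse n G G' \<pi>" unfolding \<pi>_def G'_def using branch_collapse[OF st ab(1)] .
  have \<pi>v: "\<pi> v = \<pi> a" and \<pi>ab: "\<pi> a \<noteq> \<pi> b"
    using S(2) ab(2) branch_self branches_disjoint[OF st ab(1)] unfolding \<pi>_def by auto
  have "avoided_branch n F G' (branch G' {\<pi> a, \<pi> b} (\<pi> a))"
    using collapse_avoided_branch_iff[OF c ab(1) \<pi>ab] S(1) ab(2) by simp
  moreover have "\<pi> v \<in> branch G' {\<pi> a, \<pi> b} (\<pi> a)" unfolding \<pi>v by (rule branch_self)
  moreover have "\<pi> v \<in> iv G'"
    using collapse_image[OF c] stable_tree_edge_mem(1)[OF st ab(1)] unfolding \<pi>v by blast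
  ultimately have "\<pi> v \<in> family_assignment n F G'"
    using mem_family_assignment[OF collapse_stable_target[OF c]] by blast
  moreover have "card (iv G') = 2" unfolding G'_def by simp
  ultimately show "\<exists>G' \<pi>. card (iv G') = 2 \<and> collapse n G G' \<pi> \<and> \<pi> v \<in> family_assignment n F G'"
    using c by blast
qed

lemma family_assignment_two_vertex:
  assumes st: "stable_tree n G" and two: "card (iv G) = 2" and v: "v \<in> iv G"
  shows "v \<in> family_assignment n F G \<longleftrightarrow> (\<exists>A\<in>F. A \<inter> ell n G v = {})"
proof -
  obtain w where e: "ied G = {{v, w}}" using two_vertex_treeE[OF st two v] by metis
  have "avoided_branch n F G S \<and> v \<in> S \<longleftrightarrow> S = {v} \<and> (\<exists>A\<in>F. A \<inter> ell n G v = {})" for S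
  proof
    assume S: "avoided_branch n F G S \<and> v \<in> S"
    then obtain a b where "{a, b} \<in> ied G" "S = branch G {a, b} a"
      using is_branchE[OF st] unfolding avoided_branch_def by metis
    then have "S = {a}" using branch_single_edge e by (metis singletonD)
    then show "S = {v} \<and> (\<exists>A\<in>F. A \<inter> ell n G v = {})"
      using S leaves_in_singleton unfolding avoided_branch_def by auto
  next
    assume "S = {v} \<and> (\<exists>A\<in>F. A \<inter> ell n G v = {})"
    then show "avoided_branch n F G S \<and> v \<in> S"
      using is_branchI[of v w G] branch_single_edge[OF e] leaves_in_singleton e
      unfolding avoided_branch_def by auto
  qed
  then show ?thesis using mem_family_assignment[OF st] v by auto
qed

lemma CZ_family_assignment: "CZ n (family_assignment n F) = avoiding_splits n F"
proof
  show "CZ n (family_assignment n F) \<subseteq> avoiding_splits n F"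
  proof
    fix B assume "B \<in> CZ n (family_assignment n F)"
    then obtain G v where G: "B = ell n G v" "stable_tree n G" "card (iv G) = 2"
      "v \<in> family_assignment n F G"
      unfolding CZ_def by blast
    then have "v \<in> iv G" using mem_family_assignment by blast
    then show "B \<in> avoiding_splits n F"
      using two_vertex_stable_split[OF G(2,3)] family_assignment_two_vertex[OF G(2,3)] G
      unfolding avoiding_splits_def by auto
  qed
  show "avoiding_splits n F \<subseteq> CZ n (family_assignment n F)"
  proof
    fix B assume "B \<in> avoiding_splits n F"
    then have B: "stable_split n B" "\<exists>A\<in>F. A \<inter> B = {}" unfolding avoiding_splits_def by auto
    have st: "stable_tree n (tree2 B)" using tree2_stable[OF B(1)] .
    have ell: "ell n (tree2 B) 0 = B" using B(1) ell_tree2_0 unfolding stable_split_def by blast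
    then have "0 \<in> family_assignment n F (tree2 B)"
      using family_assignment_two_vertex[OF st, of 0] B(2) by simp
    then show "B \<in> CZ n (family_assignment n F)"
      unfolding CZ_def mem_Collect_eq using st ell
      by (intro exI[of _ "tree2 B"] exI[of _ 0]) simp
  qed
qed

lemma compl_mem_avoiding_splits:
  assumes F: "F \<in> simple_intersecting_families n" and A: "A \<in> F"
  shows "{1..n} - A \<in> avoiding_splits n F"
proof -
  have bounds: "A \<subseteq> {1..n}" "2 \<le> card A" "card A \<le> n - 2"
    using F A unfolding simple_intersecting_families_def by auto
  then have "card ({1..n} - A) = n - card A" by (simp add: card_Diff_subset finite_subset)
  moreover have "{1..n} - ({1..n} - A) = A" using bounds by blast
  ultimately have "stable_split n ({1..n} - A)" using bounds unfolding stable_split_def by auto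
  then show ?thesis using A unfolding avoiding_splits_def by blast
qed

lemma compl_maximal_avoiding_splits:
  assumes F: "F \<in> simple_intersecting_families n" and A: "A \<in> F"
    and B': "B' \<in> avoiding_splits n F"
  shows "\<not> {1..n} - A \<subset> B'"
proof
  assume less: "{1..n} - A \<subset> B'"
  obtain A' where A': "A' \<in> F" "A' \<inter> B' = {}" "B' \<subseteq> {1..n}"
    using B' unfolding avoiding_splits_def stable_split_def by blast
  moreover have "A' \<subseteq> {1..n}" using F A'(1) unfolding simple_intersecting_families_def by blast
  ultimately have "A' \<subseteq> A" using less by blast
  then have "A' = A" using F A A'(1) unfolding simple_intersecting_families_def by blast
  then show False using less A'(2,3) by blast
qed

lemma maximal_avoiding_splits:
  assumes F: "F \<in> simple_intersecting_families n"
  shows "{B \<in> avoiding_splits n F. \<forall>B'\<in>avoiding_splits n F. \<not> B \<subset> B'} = (\<lambda>A. {1..n} - A) ` F"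
proof
  show "{B \<in> avoiding_splits n F. \<forall>B'\<in>avoiding_splits n F. \<not> B \<subset> B'} \<subseteq> (\<lambda>A. {1..n} - A) ` F"
  proof
    fix B assume "B \<in> {B \<in> avoiding_splits n F. \<forall>B'\<in>avoiding_splits n F. \<not> B \<subset> B'}"
    then have B: "B \<in> avoiding_splits n F" and max: "\<forall>B'\<in>avoiding_splits n F. \<not> B \<subset> B'"
      by simp_all
    then obtain A where A: "A \<in> F" "A \<inter> B = {}" "B \<subseteq> {1..n}"
      unfolding avoiding_splits_def stable_split_def by blast
    then have "B \<subseteq> {1..n} - A" by blast
    then have "B = {1..n} - A" using max compl_mem_avoiding_splits[OF F A(1)] by (meson psubsetI)
    with A(1) show "B \<in> (\<lambda>A. {1..n} - A) ` F" by (rule rev_image_eqI)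
  qed
  show "(\<lambda>A. {1..n} - A) ` F \<subseteq> {B \<in> avoiding_splits n F. \<forall>B'\<in>avoiding_splits n F. \<not> B \<subset> B'}"
  proof
    fix B assume "B \<in> (\<lambda>A. {1..n} - A) ` F"
    then obtain A where A: "A \<in> F" and B: "B = {1..n} - A" by blast
    show "B \<in> {B \<in> avoiding_splits n F. \<forall>B'\<in>avoiding_splits n F. \<not> B \<subset> B'}"
      unfolding B using compl_mem_avoiding_splits[OF F A] compl_maximal_avoiding_splits[OF F A]
      by simp
  qed
qed

lemma hyp_of_family_assignment:
  assumes F: "F \<in> simple_intersecting_families n"
  shows "hyp_of n (family_assignment n F) = F"
proof -
  have subs: "\<And>A. A \<in> F \<Longrightarrow> A \<subseteq> {1..n}" using F unfolding simple_intersecting_families_def by auto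
  have "hyp_of n (family_assignment n F) =
      (\<lambda>B. {1..n} - B) ` {B \<in> avoiding_splits n F. \<forall>B'\<in>avoiding_splits n F. \<not> B \<subset> B'}"
    unfolding hyp_of_def CZ_family_assignment by blast
  also have "\<dots> = (\<lambda>A. {1..n} - ({1..n} - A)) ` F"
    unfolding maximal_avoiding_splits[OF F] image_image ..
  also have "\<dots> = F" using subs by (auto simp: image_iff double_diff)
  finally show ?thesis .
qed

lemma family_assignment_mem_smooth_extremal:
  assumes F: "F \<in> simple_intersecting_families n"
  shows "family_assignment n F \<in> smooth_extremal_assignments n"
proof -
  have "\<forall>A\<in>F. \<forall>B\<in>F. A \<inter> B \<noteq> {}" "\<forall>A\<in>F. A \<subseteq> {1..n}"
    using F unfolding simple_intersecting_families_def by auto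
  then have "extremal n (family_assignment n F)" by (rule family_assignment_extremal)
  moreover have "\<not> stable_tree n G \<Longrightarrow> family_assignment n F G = {}" for G
    unfolding family_assignment_def by simp
  ultimately show ?thesis
    unfolding smooth_extremal_assignments_def using family_assignment_smooth by blast
qed

theorem theorem7p9:
  fixes n :: nat
  shows "bij_betw (hyp_of n) (smooth_extremal_assignments n) (simple_intersecting_families n)"
proof -
  have "hyp_of n ` smooth_extremal_assignments n \<subseteq> simple_intersecting_families n"
    using hyp_of_in_simple_intersecting_families unfolding smooth_extremal_assignments_def by blast
  moreover have "simple_intersecting_families n \<subseteq> hyp_of n ` smooth_extremal_assignments n"
  proof
    fix F assume F: "F \<in> simple_intersecting_families n"
    show "F \<in> hyp_of n ` smooth_extremal_assignments n"
      using hyp_of_family_assignment[OF F] family_assignment_mem_smooth_extremal[OF F] by force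
  qed
  ultimately show ?thesis using inj_on_hyp_of unfolding bij_betw_def by blast
qed

end
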